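(* Let $x,y,z$ be elements of the matrix metabelian Lie algebra $M_{I,\Lambda}$. Then (1) if $xyx=0$ and $xyy=0$, then $xy=0$; (2) if $xy=0$, $xz=0$ and $x\neq0$, then $yz=0$.
   Context: For sets $I,\Lambda$ and a field $k$, let $R=k[x_\alpha:\alpha\in\Lambda]$ and $T$ the free $R$-module with basis $\{u_i:i\in I\}$. $M_{I,\Lambda}$ is the set of pairs $(f,u)$, $f\in R$, $u\in T$, with componentwise addition and scalar multiplication and product $(f,u)\circ(g,v)=(0,ug-vf)$. Products are left-normed: $xy=x\circ y$, $xyz=(x\circ y)\circ z$. *)

theory Defs
  imports "HOL-Library.Poly_Mapping"
begin

text \<open>R = k[x_alpha : alpha in Lambda]: polynomials in variables of type 'l,
  i.e. finitely supported maps from monomials (finitely supported exponent maps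
  'l \<Rightarrow>0 nat) to coefficients in k.\<close>
type_synonym ('l, 'k) mpoly = "('l \<Rightarrow>\<^sub>0 nat) \<Rightarrow>\<^sub>0 'k"

text \<open>T = free R-module with basis u_i (i :: 'i): finitely supported maps 'i \<Rightarrow>0 R.\<close>
type_synonym ('i, 'l, 'k) freemod = "'i \<Rightarrow>\<^sub>0 ('l, 'k) mpoly"

type_synonym ('i, 'l, 'k) metab = "('l, 'k) mpoly \<times> ('i, 'l, 'k) freemod"

definition mscale :: "('i, 'l, 'k::field) freemod \<Rightarrow> ('l, 'k) mpoly \<Rightarrow> ('i, 'l, 'k) freemod"
  where "mscale u g = Poly_Mapping.map (\<lambda>c. c * g) u"

definition mprod :: "('i, 'l, 'k::field) metab \<Rightarrow> ('i, 'l, 'k) metab \<Rightarrow> ('i, 'l, 'k) metab"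
  (infixl "\<circle>" 70)
  where "mprod a b = (0, mscale (snd a) (fst b) - mscale (snd b) (fst a))"

end

theory Submission
  imports Defs
begin

text \<open>Everything reduces to cancelling nonzero polynomials: \<open>R\<close> is an integral domain, so the
  free module \<open>T\<close> is torsion-free. For (1), \<open>xy = (0, w)\<close> with \<open>w = ug - vf\<close>, and the
  hypotheses say \<open>wf = wg = 0\<close>; either \<open>f\<close> or \<open>g\<close> is nonzero, or \<open>w = 0\<close> trivially. For (2),
  \<open>ug = vf\<close> and \<open>uh = tf\<close> give \<open>(vh - tg) f = ugh - uhg = 0\<close>, which settles \<open>f \<noteq> 0\<close>; if
  \<open>f = 0\<close> then \<open>u \<noteq> 0\<close>, so \<open>g = h = 0\<close>. That \<open>R\<close> is a domain is shown by comparing leading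
  terms with respect to an additive linear order on the monomials involved, obtained by
  renaming their finitely many variables to natural numbers.\<close>

lemma lookup_mult_unique_sum:
  fixes p q :: "'a::comm_monoid_add \<Rightarrow>\<^sub>0 'b::semiring_0"
  assumes unique: "\<And>a' b'. a' \<in> Poly_Mapping.keys p \<Longrightarrow> b' \<in> Poly_Mapping.keys q \<Longrightarrow>
      a' + b' = a + b \<Longrightarrow> a' = a \<and> b' = b"
  shows "Poly_Mapping.lookup (p * q) (a + b) = Poly_Mapping.lookup p a * Poly_Mapping.lookup q b"
proof -
  have "Poly_Mapping.lookup (p * q) (a + b) =
      (\<Sum>(a', b'). Poly_Mapping.lookup p a' * Poly_Mapping.lookup q b' when a + b = a' + b')"
    unfolding times_poly_mapping.rep_eq
    by (rule prod_fun_unfold_prod) (simp_all add: finite_keys[unfolded keys.rep_eq])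
  also have "\<dots> =
      (\<Sum>ab. (case ab of (a', b') \<Rightarrow> Poly_Mapping.lookup p a' * Poly_Mapping.lookup q b')
        when (a, b) = ab)"
  proof (rule Sum_any.cong)
    fix ab :: "'a \<times> 'a"
    obtain a' b' where [simp]: "ab = (a', b')" by (cases ab)
    show "(case ab of (a', b') \<Rightarrow>
            Poly_Mapping.lookup p a' * Poly_Mapping.lookup q b' when a + b = a' + b') =
          ((case ab of (a', b') \<Rightarrow> Poly_Mapping.lookup p a' * Poly_Mapping.lookup q b')
            when (a, b) = ab)"
      using unique[of a' b']
      by (cases "a' \<in> Poly_Mapping.keys p \<and> b' \<in> Poly_Mapping.keys q")
        (auto simp: when_def in_keys_iff)
  qed
  also have "\<dots> = Poly_Mapping.lookup p a * Poly_Mapping.lookup q b" by simp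
  finally show ?thesis .
qed

text \<open>The library proves the absence of zero divisors only for linearly ordered exponent
  monoids; here the order is pulled back along an additive map \<open>\<phi>\<close>.\<close>

lemma mult_neq_0_if_additive_embedding:
  fixes p q :: "'a::comm_monoid_add \<Rightarrow>\<^sub>0 'b::semiring_no_zero_divisors"
    and \<phi> :: "'a \<Rightarrow> 'c::{ordered_cancel_comm_monoid_add, linorder}"
  assumes "p \<noteq> 0" "q \<noteq> 0"
    and additive: "\<And>m n. \<phi> (m + n) = \<phi> m + \<phi> n"
    and inj: "inj_on \<phi> (Poly_Mapping.keys p \<union> Poly_Mapping.keys q)"
  shows "p * q \<noteq> 0"
proof -
  have nonempty: "Poly_Mapping.keys p \<noteq> {}" "Poly_Mapping.keys q \<noteq> {}"
    using assms(1,2) by auto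
  have "\<exists>a\<in>Poly_Mapping.keys r. \<forall>a'\<in>Poly_Mapping.keys r. \<phi> a' \<le> \<phi> a"
    if "Poly_Mapping.keys r \<noteq> {}" for r :: "'a \<Rightarrow>\<^sub>0 'b"
  proof -
    have "Max (\<phi> ` Poly_Mapping.keys r) \<in> \<phi> ` Poly_Mapping.keys r" using that by simp
    then show ?thesis by (metis Max_ge finite_imageI finite_keys imageE image_eqI)
  qed
  with nonempty obtain a b
    where a: "a \<in> Poly_Mapping.keys p" "\<And>a'. a' \<in> Poly_Mapping.keys p \<Longrightarrow> \<phi> a' \<le> \<phi> a"
      and b: "b \<in> Poly_Mapping.keys q" "\<And>b'. b' \<in> Poly_Mapping.keys q \<Longrightarrow> \<phi> b' \<le> \<phi> b"
    by meson
  have "a' = a \<and> b' = b"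
    if "a' \<in> Poly_Mapping.keys p" "b' \<in> Poly_Mapping.keys q" "a' + b' = a + b" for a' b'
  proof -
    have sum_eq: "\<phi> a' + \<phi> b' = \<phi> a + \<phi> b" using that(3) additive by metis
    have "\<phi> a' = \<phi> a"
    proof (rule ccontr)
      assume "\<phi> a' \<noteq> \<phi> a"
      with a(2)[OF that(1)] have "\<phi> a' < \<phi> a" by simp
      with b(2)[OF that(2)] have "\<phi> a' + \<phi> b' < \<phi> a + \<phi> b" by (simp add: add_less_le_mono)
      with sum_eq show False by simp
    qed
    moreover from this sum_eq have "\<phi> b' = \<phi> b" by simp
    ultimately show ?thesis using inj that(1,2) a(1) b(1) by (auto dest: inj_onD)
  qed
  then have "Poly_Mapping.lookup (p * q) (a + b) = Poly_Mapping.lookup p a * Poly_Mapping.lookup q b"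
    by (rule lookup_mult_unique_sum)
  also have "\<dots> \<noteq> 0" using a(1) b(1) by (simp add: in_keys_iff)
  finally show ?thesis by auto
qed

lemma exists_additive_embedding_into_nat_monomials:
  fixes S :: "('l \<Rightarrow>\<^sub>0 nat) set"
  assumes "finite S"
  obtains \<phi> :: "('l \<Rightarrow>\<^sub>0 nat) \<Rightarrow> (nat \<Rightarrow>\<^sub>0 nat)"
  where "\<And>m n. \<phi> (m + n) = \<phi> m + \<phi> n" and "inj_on \<phi> S"
proof -
  define V where "V = \<Union> (Poly_Mapping.keys ` S)"
  have "finite V" using assms by (simp add: V_def)
  then obtain h :: "'l \<Rightarrow> nat" where h: "inj_on h V"
    using finite_imp_inj_to_nat_seg by blast
  define \<phi> :: "('l \<Rightarrow>\<^sub>0 nat) \<Rightarrow> (nat \<Rightarrow>\<^sub>0 nat)"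
    where "\<phi> m = (\<Sum>v\<in>V. Poly_Mapping.single (h v) (Poly_Mapping.lookup m v))" for m
  have "\<phi> (m + n) = \<phi> m + \<phi> n" for m n
    by (simp add: \<phi>_def lookup_add single_add sum.distrib)
  moreover have "inj_on \<phi> S"
  proof (rule inj_onI)
    fix m n assume mn: "m \<in> S" "n \<in> S" "\<phi> m = \<phi> n"
    have lookup_\<phi>: "Poly_Mapping.lookup (\<phi> m') (h v) = Poly_Mapping.lookup m' v"
      if "v \<in> V" for m' v
    proof -
      have "Poly_Mapping.lookup (\<phi> m') (h v) =
          (\<Sum>v'\<in>V. Poly_Mapping.lookup m' v' when v' = v)"
        unfolding \<phi>_def lookup_sum lookup_single
        by (rule sum.cong) (use h that in \<open>auto simp: when_def dest: inj_onD\<close>)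
      also have "\<dots> = Poly_Mapping.lookup m' v" using \<open>finite V\<close> that by (simp add: when_def)
      finally show ?thesis .
    qed
    show "m = n"
    proof (rule poly_mapping_eqI)
      fix v
      show "Poly_Mapping.lookup m v = Poly_Mapping.lookup n v"
      proof (cases "v \<in> V")
        case True
        then show ?thesis using lookup_\<phi>[of v m] lookup_\<phi>[of v n] mn(3) by simp
      next
        case False
        then show ?thesis using mn(1,2) by (auto simp: V_def in_keys_iff)
      qed
    qed
  qed
  ultimately show ?thesis by (rule that)
qed

lemma mpoly_mult_eq_0_iff [simp]:
  fixes p q :: "('l, 'k::semiring_no_zero_divisors) mpoly"
  shows "p * q = 0 \<longleftrightarrow> p = 0 \<or> q = 0"
proof (cases "p = 0 \<or> q = 0")
  case False
  obtain \<phi> :: "('l \<Rightarrow>\<^sub>0 nat) \<Rightarrow> (nat \<Rightarrow>\<^sub>0 nat)"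
    where "\<And>m n. \<phi> (m + n) = \<phi> m + \<phi> n"
      and "inj_on \<phi> (Poly_Mapping.keys p \<union> Poly_Mapping.keys q)"
    by (rule exists_additive_embedding_into_nat_monomials[of "Poly_Mapping.keys p \<union> Poly_Mapping.keys q"])
      auto
  with False show ?thesis using mult_neq_0_if_additive_embedding by blast
qed auto

lemma lookup_mscale: "Poly_Mapping.lookup (mscale u g) i = Poly_Mapping.lookup u i * g"
  unfolding mscale_def by (simp add: Poly_Mapping.map.rep_eq when_def)

lemma mscale_diff: "mscale (u - w) g = mscale u g - mscale w g"
  by (rule poly_mapping_eqI) (simp add: lookup_mscale lookup_minus algebra_simps)

lemma mscale_mscale: "mscale (mscale u g) h = mscale u (g * h)"
  by (rule poly_mapping_eqI) (simp add: lookup_mscale algebra_simps)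

lemma mscale_eq_0_iff [simp]: "mscale u g = 0 \<longleftrightarrow> u = 0 \<or> g = 0"
proof -
  have "mscale u g = 0 \<longleftrightarrow> (\<forall>i. Poly_Mapping.lookup u i * g = 0)"
    by (metis lookup_mscale lookup_zero poly_mapping_eqI)
  also have "\<dots> \<longleftrightarrow> u = 0 \<or> g = 0"
    by (metis lookup_zero mpoly_mult_eq_0_iff poly_mapping_eqI)
  finally show ?thesis .
qed

lemma mscale_0_right [simp]: "mscale u 0 = 0"
  by simp

lemma mprod_Pair [simp]: "(f, u) \<circle> (g, v) = (0, mscale u g - mscale v f)"
  by (simp add: mprod_def)

lemma mprod_eq_0_if_mprod_mprod_eq_0:
  fixes x y :: "('i, 'l, 'k::field) metab"
  assumes "x \<circle> y \<circle> x = (0, 0)" and "x \<circle> y \<circle> y = (0, 0)"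
  shows "x \<circle> y = (0, 0)"
proof -
  obtain f u g v where x: "x = (f, u)" and y: "y = (g, v)" by fastforce
  define w where "w = mscale u g - mscale v f"
  have "mscale w f = 0" "mscale w g = 0"
    using assms by (simp_all add: x y w_def)
  then have "w = 0" by (auto simp: w_def)
  then show ?thesis by (simp add: x y w_def)
qed

lemma mprod_eq_0_if_common_left_annihilator:
  fixes x y z :: "('i, 'l, 'k::field) metab"
  assumes "x \<circle> y = (0, 0)" and "x \<circle> z = (0, 0)" and "x \<noteq> (0, 0)"
  shows "y \<circle> z = (0, 0)"
proof -
  obtain f u g v h t where x: "x = (f, u)" and y: "y = (g, v)" and z: "z = (h, t)"
    by (metis surj_pair)
  have ug: "mscale u g = mscale v f" and uh: "mscale u h = mscale t f"
    using assms(1,2) by (simp_all add: x y z)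
  have "mscale v h - mscale t g = 0"
  proof (cases "f = 0")
    case False
    have "mscale (mscale v h - mscale t g) f = mscale (mscale v f) h - mscale (mscale t f) g"
      by (simp add: mscale_diff mscale_mscale mult.commute)
    also have "\<dots> = mscale (mscale u g) h - mscale (mscale u h) g"
      by (simp add: ug uh)
    also have "\<dots> = 0" by (simp add: mscale_mscale mult.commute)
    finally show ?thesis using False by simp
  next
    case True
    with assms(3) ug uh show ?thesis by (simp add: x)
  qed
  then show ?thesis by (simp add: y z)
qed

theorem lemma3p1p4:
  fixes x y z :: "('i, 'l, 'k::field) metab"
  shows "(x \<circle> y \<circle> x = (0, 0) \<and> x \<circle> y \<circle> y = (0, 0) \<longrightarrow> x \<circle> y = (0, 0))
       \<and> (x \<circle> y = (0, 0) \<and> x \<circle> z = (0, 0) \<and> x \<noteq> (0, 0) \<longrightarrow> y \<circle> z = (0, 0))"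
  using mprod_eq_0_if_mprod_mprod_eq_0[of x y] mprod_eq_0_if_common_left_annihilator[of x y z]
  by blast

end
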